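(* Let $M$ be a manifold, $l>0$, and let $A,B,C$ be pairwise disjoint finite sets with $A\neq\emptyset$. Then the map $$\mu:D_{A,B,C}(M,S^{2l})\to D_{A\cup B}(M,S^{2l})\wedge D_{A\cup C}(M,S^{2l}),\qquad (\xi_A,\xi_B,\xi_C)\mapsto(\xi_A\cup\xi_B,\ \xi_A\cup\xi_C)$$ is based null-homotopic.
   Context: For a finite set $S$, $F_S(M)$ is the space of injective maps $S\to M$ (ordered configurations labelled by $S$). For a sequence $\mathcal I=(I_1,\dots,I_k)$ of pairwise disjoint finite sets and a based space $(X,x_0)$, $D_{\mathcal I}(M,X)=\big(F_{\sqcup_i I_i}(M)\times_{\prod_i\mathrm{Sym}(I_i)}X^{\sqcup_i I_i}\big)/\sim$, where $\prod_i\mathrm{Sym}(I_i)$ acts diagonally by permuting coordinates and $\sim$ collapses to a single basepoint $\infty$ all elements with some label equal to $x_0$. Thus an element of $D_{A,B,C}(M,X)$ is a triple $(\xi_A,\xi_B,\xi_C)$ of labelled configurations of sizes $|A|,|B|,|C|$ with all points distinct, each unordered within its colour; $D_{A\cup B}(M,X)$ is the one-colour version for the set $A\cup B$. Here $S^{2l}$ is based at some point $x_0$ (e.g. the point at infinity of $\mathbb R^{2l}\cup\{\infty\}$). *)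

theory Defs
  imports "HOL-Analysis.Analysis"
begin

definition top_manifold :: "'m topology \<Rightarrow> nat \<Rightarrow> bool" where
  "top_manifold M n \<longleftrightarrow> Hausdorff_space M \<and> second_countable M \<and>
     (\<forall>x\<in>topspace M. \<exists>U V. openin M U \<and> x \<in> U \<and> openin (Euclidean_space n) V \<and>
        subtopology M U homeomorphic_space subtopology (Euclidean_space n) V)"

text \<open>Quotient topology on a target set T induced by a map q (with q ` topspace X \<subseteq> T;
  points of T outside the image are isolated).\<close>
definition quot_top :: "'a topology \<Rightarrow> ('a \<Rightarrow> 'b) \<Rightarrow> 'b set \<Rightarrow> 'b topology" where
  "quot_top X q T = topology (\<lambda>U. U \<subseteq> T \<and> openin X {x \<in> topspace X. q x \<in> U})"

text \<open>F_S(M) \<times> X^S: functions S \<rightarrow> M \<times> X (undefined outside S) with injective M-part.\<close>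
definition lconf_top :: "'m topology \<Rightarrow> 'x topology \<Rightarrow> 'i set \<Rightarrow> ('i \<Rightarrow> 'm \<times> 'x) topology" where
  "lconf_top M X S = subtopology (product_topology (\<lambda>_. prod_topology M X) S)
      {f. inj_on (\<lambda>i. fst (f i)) S}"

definition lconf_deg :: "'m topology \<Rightarrow> 'x topology \<Rightarrow> 'x \<Rightarrow> 'i set list \<Rightarrow> ('i \<Rightarrow> 'm \<times> 'x) set" where
  "lconf_deg M X x0 Is = {f \<in> topspace (lconf_top M X (\<Union>(set Is))). \<exists>i\<in>\<Union>(set Is). snd (f i) = x0}"

definition lconf_class :: "'m topology \<Rightarrow> 'x topology \<Rightarrow> 'x \<Rightarrow> 'i set list \<Rightarrow> ('i \<Rightarrow> 'm \<times> 'x) \<Rightarrow> ('i \<Rightarrow> 'm \<times> 'x) set" where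
  "lconf_class M X x0 Is f =
     (if f \<in> lconf_deg M X x0 Is then lconf_deg M X x0 Is
      else {f \<circ> \<sigma> | \<sigma>. \<sigma> permutes (\<Union>(set Is)) \<and> (\<forall>I\<in>set Is. \<sigma> ` I = I)})"

text \<open>D_Is(M,X), with basepoint lconf_deg M X x0 Is.\<close>
definition Dsp :: "'m topology \<Rightarrow> 'x topology \<Rightarrow> 'x \<Rightarrow> 'i set list \<Rightarrow> ('i \<Rightarrow> 'm \<times> 'x) set topology" where
  "Dsp M X x0 Is = quot_top (lconf_top M X (\<Union>(set Is))) (lconf_class M X x0 Is)
      (lconf_class M X x0 Is ` topspace (lconf_top M X (\<Union>(set Is))) \<union> {lconf_deg M X x0 Is})"

definition wedge_set :: "'a topology \<Rightarrow> 'a \<Rightarrow> 'b topology \<Rightarrow> 'b \<Rightarrow> ('a \<times> 'b) set" where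
  "wedge_set X x0 Y y0 = {p \<in> topspace (prod_topology X Y). fst p = x0 \<or> snd p = y0}"

definition smash_class :: "'a topology \<Rightarrow> 'a \<Rightarrow> 'b topology \<Rightarrow> 'b \<Rightarrow> 'a \<times> 'b \<Rightarrow> ('a \<times> 'b) set" where
  "smash_class X x0 Y y0 p = (if fst p = x0 \<or> snd p = y0 then wedge_set X x0 Y y0 else {p})"

definition smash :: "'a topology \<Rightarrow> 'a \<Rightarrow> 'b topology \<Rightarrow> 'b \<Rightarrow> ('a \<times> 'b) set topology" where
  "smash X x0 Y y0 = quot_top (prod_topology X Y) (smash_class X x0 Y y0)
      (smash_class X x0 Y y0 ` topspace (prod_topology X Y) \<union> {wedge_set X x0 Y y0})"

definition mu_map :: "'m topology \<Rightarrow> 'x topology \<Rightarrow> 'x \<Rightarrow> 'i set \<Rightarrow> 'i set \<Rightarrow> 'i set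
    \<Rightarrow> ('i \<Rightarrow> 'm \<times> 'x) set \<Rightarrow> (('i \<Rightarrow> 'm \<times> 'x) set \<times> ('i \<Rightarrow> 'm \<times> 'x) set) set" where
  "mu_map M X x0 A B C z =
     (if z = lconf_deg M X x0 [A, B, C]
      then wedge_set (Dsp M X x0 [A \<union> B]) (lconf_deg M X x0 [A \<union> B])
                     (Dsp M X x0 [A \<union> C]) (lconf_deg M X x0 [A \<union> C])
      else (let f = (SOME f. f \<in> topspace (lconf_top M X (A \<union> B \<union> C)) \<and> lconf_class M X x0 [A, B, C] f = z)
            in smash_class (Dsp M X x0 [A \<union> B]) (lconf_deg M X x0 [A \<union> B])
                           (Dsp M X x0 [A \<union> C]) (lconf_deg M X x0 [A \<union> C])
                 (lconf_class M X x0 [A \<union> B] (restrict f (A \<union> B)),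
                  lconf_class M X x0 [A \<union> C] (restrict f (A \<union> C)))))"

end

theory Submission
  imports Defs
begin

(* The sphere S^k, k \<ge> 1, carries two homotopies a, b starting at the identity, a fixing the
   basepoint x0, such that at time 1 every point is sent to x0 by a or by b: a pushes the closed
   hemisphere around x0 onto x0, while b pushes the opposite closed hemisphere onto -x0 and then
   rotates -x0 to x0 along a great circle. Applying a_t to the labels of colour A in the first
   factor of mu and b_t to them in the second factor commutes with the colour-preserving
   permutations and sends the collapsed configurations to the basepoint, so it descends to a based
   homotopy on D_{A,B,C}(M,S^k) starting at mu. At time 1 a point of colour A (A is nonempty) carries
   the label x0 in one of the two factors, so the homotopy ends at the basepoint of the smash product. *)

section \<open>Geometry of the sphere\<close>

definition dot :: "nat \<Rightarrow> (nat \<Rightarrow> real) \<Rightarrow> (nat \<Rightarrow> real) \<Rightarrow> real" where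
  "dot k v w = (\<Sum>j\<le>k. v j * w j)"

definition unit_vec :: "nat \<Rightarrow> (nat \<Rightarrow> real) \<Rightarrow> nat \<Rightarrow> real" where
  "unit_vec k v = (\<lambda>i. v i / sqrt (dot k v v))"

lemma dot_commute: "dot k v w = dot k w v"
  by (simp add: dot_def mult.commute)

lemma dot_add_left [simp]: "dot k (\<lambda>i. v i + w i) y = dot k v y + dot k w y"
  by (simp add: dot_def distrib_right sum.distrib)

lemma dot_add_right [simp]: "dot k y (\<lambda>i. v i + w i) = dot k y v + dot k y w"
  by (simp add: dot_def distrib_left sum.distrib)

lemma dot_scale_left [simp]: "dot k (\<lambda>i. c * v i) y = c * dot k v y"
  by (simp add: dot_def sum_distrib_left mult.assoc)

lemma dot_scale_right [simp]: "dot k y (\<lambda>i. c * v i) = c * dot k y v"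
  by (simp add: dot_def sum_distrib_left algebra_simps)

lemma dot_minus_left [simp]: "dot k (\<lambda>i. - v i) y = - dot k v y"
  by (simp add: dot_def sum_negf)

lemma dot_minus_right [simp]: "dot k y (\<lambda>i. - v i) = - dot k y v"
  by (simp add: dot_def sum_negf)

lemma dot_delta_left: "i \<le> k \<Longrightarrow> dot k (\<lambda>m. if m = i then c else 0) v = c * v i"
  by (simp add: dot_def if_distrib[of "\<lambda>y. y * _"] cong: if_cong)

lemma dot_delta_right: "i \<le> k \<Longrightarrow> dot k v (\<lambda>m. if m = i then c else 0) = v i * c"
  by (simp add: dot_def if_distrib[of "\<lambda>y. _ * y"] cong: if_cong)

lemma dot_self_nonneg: "dot k v v \<ge> 0"
  by (simp add: dot_def sum_nonneg)

lemma topspace_nsphere_iff: "y \<in> topspace (nsphere k) \<longleftrightarrow> dot k y y = 1 \<and> (\<forall>i>k. y i = 0)"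
  by (simp add: nsphere dot_def power2_eq_square)

lemma dot_unit_ge_minus_one:
  assumes "dot k y y = 1" "dot k p p = 1" shows "dot k y p \<ge> -1"
  using dot_self_nonneg[of k "\<lambda>i. y i + p i"] assms by (simp add: dot_commute[of k p y])

lemma unit_vec_scale:
  assumes "c > 0" "dot k y y = 1" shows "unit_vec k (\<lambda>i. c * y i) = y"
  using assms by (simp add: unit_vec_def real_sqrt_mult)

lemma unit_vec_unit: "dot k y y = 1 \<Longrightarrow> unit_vec k y = y"
  using unit_vec_scale[of 1 k y] by simp

lemma unit_vec_eq_scale: "unit_vec k v = (\<lambda>i. inverse (sqrt (dot k v v)) * v i)"
  by (simp add: unit_vec_def divide_inverse mult.commute)

lemma dot_unit_vec:
  assumes "dot k v v > 0" shows "dot k (unit_vec k v) (unit_vec k v) = 1"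
proof -
  have "dot k (unit_vec k v) (unit_vec k v) = inverse (sqrt (dot k v v)) * (inverse (sqrt (dot k v v)) * dot k v v)"
    unfolding unit_vec_eq_scale by simp
  also have "\<dots> = 1"
    using assms by (simp add: field_simps)
  finally show ?thesis .
qed

lemma continuous_map_real_compose:
  "continuous_on UNIV g \<Longrightarrow> continuous_map X euclideanreal f \<Longrightarrow>
     continuous_map X euclideanreal (\<lambda>x. g (f x))"
  using continuous_map_compose[of X euclideanreal f euclideanreal g] by (simp add: o_def)

lemma continuous_map_dot:
  assumes "\<And>j. continuous_map Z euclideanreal (\<lambda>z. v z j)"
    and "\<And>j. continuous_map Z euclideanreal (\<lambda>z. w z j)"
  shows "continuous_map Z euclideanreal (\<lambda>z. dot k (v z) (w z))"
  unfolding dot_def by (simp add: continuous_map_sum continuous_map_real_mult assms)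

lemma continuous_map_unit_vec:
  assumes cont: "\<And>i. continuous_map Z euclideanreal (\<lambda>z. v z i)"
    and vanish: "\<And>z i. z \<in> topspace Z \<Longrightarrow> i > k \<Longrightarrow> v z i = 0"
    and pos: "\<And>z. z \<in> topspace Z \<Longrightarrow> dot k (v z) (v z) > 0"
  shows "continuous_map Z (nsphere k) (\<lambda>z. unit_vec k (v z))"
proof -
  have "continuous_map Z (powertop_real UNIV) (\<lambda>z. unit_vec k (v z))"
    unfolding continuous_map_componentwise_UNIV unit_vec_def
    using pos by (intro allI continuous_intros cont continuous_map_dot) (auto simp: less_le)
  moreover have "unit_vec k (v z) \<in> topspace (nsphere k)" if "z \<in> topspace Z" for z
    using pos[OF that] vanish[OF that] by (simp add: topspace_nsphere_iff dot_unit_vec) (simp add: unit_vec_def)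
  ultimately show ?thesis
    by (auto simp: nsphere continuous_map_in_subtopology)
qed

text \<open>At time 1 the coefficient of y vanishes exactly when dot k y p \<ge> 0, so the
  closed hemisphere around p is collapsed to p; the max keeps the coefficient nonnegative, which
  keeps the vector away from 0.\<close>
definition collapse_towards :: "nat \<Rightarrow> (nat \<Rightarrow> real) \<Rightarrow> real \<Rightarrow> (nat \<Rightarrow> real) \<Rightarrow> nat \<Rightarrow> real" where
  "collapse_towards k p t y = (\<lambda>i. max 0 (1 - t * (1 + 2 * dot k y p)) * y i + t * p i)"

lemma collapse_towards_0 [simp]: "collapse_towards k p 0 y = y"
  by (simp add: collapse_towards_def)

lemma collapse_towards_1:
  "dot k y p \<ge> 0 \<Longrightarrow> collapse_towards k p 1 y = p"
  by (simp add: collapse_towards_def)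

lemma unit_vec_collapse_towards_self:
  assumes "dot k p p = 1" "t \<ge> 0"
  shows "unit_vec k (collapse_towards k p t p) = p"
proof -
  have "collapse_towards k p t p = (\<lambda>i. (max 0 (1 - 3 * t) + t) * p i)"
    using assms by (simp add: collapse_towards_def algebra_simps)
  moreover have "max 0 (1 - 3 * t) + t > 0"
    using assms by (cases "t = 0") auto
  ultimately show ?thesis
    using assms unit_vec_scale by simp
qed

lemma dot_collapse_towards_pos:
  assumes y: "dot k y y = 1" and p: "dot k p p = 1" and t: "t \<ge> 0"
  shows "dot k (collapse_towards k p t y) (collapse_towards k p t y) > 0"
proof -
  define c where "c = dot k y p"
  define m where "m = max 0 (1 - t * (1 + 2 * c))"
  have c: "c \<ge> -1"
    unfolding c_def using y p by (rule dot_unit_ge_minus_one)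
  have "dot k (collapse_towards k p t y) (collapse_towards k p t y) = (m - t)^2 + 2 * m * t * (1 + c)"
    using y p unfolding collapse_towards_def
    by (simp add: dot_commute[of k p y]) (simp add: m_def c_def power2_eq_square algebra_simps)
  also have "\<dots> > 0"
  proof (cases "m = t")
    case True
    have "t \<noteq> 0" using True by (auto simp: m_def)
    moreover have "c \<noteq> -1" using True t by (auto simp: m_def)
    ultimately show ?thesis
      using True t c by (simp add: m_def)
  next
    case False
    then show ?thesis
      using t c by (intro add_pos_nonneg) (auto simp: m_def)
  qed
  finally show ?thesis .
qed

text \<open>Rotation by the angle \<pi>t in the plane spanned by the orthonormal vectors x and u,
  and the identity on its orthogonal complement.\<close>
definition plane_rotation ::
    "nat \<Rightarrow> (nat \<Rightarrow> real) \<Rightarrow> (nat \<Rightarrow> real) \<Rightarrow> real \<Rightarrow> (nat \<Rightarrow> real) \<Rightarrow> nat \<Rightarrow> real" where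
  "plane_rotation k x u t w =
     (\<lambda>i. w i + ((cos (pi * t) - 1) * dot k w x - sin (pi * t) * dot k w u) * x i
             + ((cos (pi * t) - 1) * dot k w u + sin (pi * t) * dot k w x) * u i)"

lemma plane_rotation_0 [simp]: "plane_rotation k x u 0 w = w"
  by (simp add: plane_rotation_def)

lemma plane_rotation_1:
  assumes "dot k x x = 1" "dot k x u = 0"
  shows "plane_rotation k x u 1 (\<lambda>i. - x i) = x"
  using assms by (simp add: plane_rotation_def)

lemma dot_plane_rotation:
  assumes x: "dot k x x = 1" and u: "dot k u u = 1" and xu: "dot k x u = 0"
  shows "dot k (plane_rotation k x u t w) (plane_rotation k x u t w) = dot k w w"
proof -
  define C S where "C = cos (pi * t)" and "S = sin (pi * t)"
  have "dot k (plane_rotation k x u t w) (plane_rotation k x u t w)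
          = dot k w w + (S^2 + C^2 - 1) * ((dot k w x)^2 + (dot k w u)^2)"
    using x u xu unfolding plane_rotation_def C_def[symmetric] S_def[symmetric]
    by (simp add: dot_commute[of k x w] dot_commute[of k u w] dot_commute[of k u x])
      (simp add: power2_eq_square algebra_simps)
  then show ?thesis
    by (simp add: C_def S_def)
qed

lemma exists_orthogonal_unit:
  assumes x: "dot k x x = 1" and k: "k \<ge> 1"
  obtains u where "dot k u u = 1" "dot k x u = 0" "\<forall>m>k. u m = 0"
proof -
  have "\<exists>i\<le>k. x i \<noteq> 0"
  proof (rule ccontr)
    assume "\<not> ?thesis"
    then have "dot k x x = 0" by (simp add: dot_def)
    with x show False by simp
  qed
  then obtain i where i: "i \<le> k" "x i \<noteq> 0" by blast
  define j where "j = (if i = 0 then 1 else (0::nat))"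
  have j: "j \<le> k" "j \<noteq> i"
    using k by (auto simp: j_def)
  define w where "w = (\<lambda>m. (if m = i then x j else 0) + (if m = j then - x i else 0))"
  have xw: "dot k x w = 0"
    using i j unfolding w_def by (simp add: dot_delta_right mult.commute)
  have ww: "dot k w w = (x i)\<^sup>2 + (x j)\<^sup>2"
    using i j unfolding w_def by (simp add: dot_delta_left dot_delta_right power2_eq_square)
  show thesis
  proof
    show "dot k (unit_vec k w) (unit_vec k w) = 1"
      using ww i by (intro dot_unit_vec) (simp add: add_pos_nonneg)
    show "dot k x (unit_vec k w) = 0"
      by (simp add: unit_vec_eq_scale xw)
    show "\<forall>m>k. unit_vec k w m = 0"
      using i j by (simp add: unit_vec_def w_def)
  qed
qed

lemma continuous_map_collapse_towards:
  assumes "continuous_map Z euclideanreal f" and "\<And>j. continuous_map Z euclideanreal (\<lambda>z. g z j)"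
  shows "continuous_map Z euclideanreal (\<lambda>z. collapse_towards k p (f z) (g z) i)"
  unfolding collapse_towards_def by (intro continuous_intros continuous_map_dot assms)

lemma continuous_map_plane_rotation:
  assumes f: "continuous_map Z euclideanreal f" and g: "\<And>j. continuous_map Z euclideanreal (\<lambda>z. g z j)"
  shows "continuous_map Z euclideanreal (\<lambda>z. plane_rotation k x u (f z) (g z) i)"
proof -
  have "continuous_map Z euclideanreal (\<lambda>z. cos (pi * f z))" "continuous_map Z euclideanreal (\<lambda>z. sin (pi * f z))"
    by (rule continuous_map_real_compose[OF _ continuous_map_real_mult_left[OF f]], intro continuous_intros)+
  then show ?thesis
    unfolding plane_rotation_def by (intro continuous_intros continuous_map_dot g)
qed

lemma continuous_map_fst_real: "continuous_map (prod_topology (top_of_set S) X) euclideanreal fst"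
  using continuous_map_fst continuous_map_into_fulltopology by blast

lemma continuous_map_snd_nsphere_coordinate:
  "continuous_map (prod_topology X (nsphere k)) euclideanreal (\<lambda>z. snd z j)"
  using continuous_map_compose[OF continuous_map_snd continuous_map_nsphere_projection] by (simp add: o_def)

lemma continuous_map_nsphere_collapse_towards:
  assumes p: "p \<in> topspace (nsphere k)"
  shows "continuous_map (prod_topology (top_of_set {0..1}) (nsphere k)) (nsphere k)
           (\<lambda>(t, y). unit_vec k (collapse_towards k p t y))"
  unfolding case_prod_beta'
proof (rule continuous_map_unit_vec)
  fix z i assume z: "z \<in> topspace (prod_topology (top_of_set {0..1::real}) (nsphere k))"
  then show "collapse_towards k p (fst z) (snd z) i = 0" if "i > k"
    using p that by (auto simp: collapse_towards_def topspace_nsphere_iff)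
  show "dot k (collapse_towards k p (fst z) (snd z)) (collapse_towards k p (fst z) (snd z)) > 0"
    using p z by (intro dot_collapse_towards_pos) (auto simp: topspace_nsphere_iff)
qed (intro continuous_map_collapse_towards continuous_map_fst_real continuous_map_snd_nsphere_coordinate)

lemma continuous_map_nsphere_rotate_collapse_towards:
  assumes p: "p \<in> topspace (nsphere k)" and x: "x \<in> topspace (nsphere k)" and u: "u \<in> topspace (nsphere k)"
    and xu: "dot k x u = 0"
  shows "continuous_map (prod_topology (top_of_set {0..1}) (nsphere k)) (nsphere k)
           (\<lambda>(t, y). unit_vec k (plane_rotation k x u t (collapse_towards k p t y)))"
  unfolding case_prod_beta'
proof (rule continuous_map_unit_vec)
  fix z i assume z: "z \<in> topspace (prod_topology (top_of_set {0..1::real}) (nsphere k))"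
  then show "plane_rotation k x u (fst z) (collapse_towards k p (fst z) (snd z)) i = 0" if "i > k"
    using p x u that by (auto simp: plane_rotation_def collapse_towards_def topspace_nsphere_iff)
  have "dot k x x = 1" "dot k u u = 1"
    using x u by (simp_all add: topspace_nsphere_iff)
  then show "dot k (plane_rotation k x u (fst z) (collapse_towards k p (fst z) (snd z)))
                   (plane_rotation k x u (fst z) (collapse_towards k p (fst z) (snd z))) > 0"
    using p z xu by (simp add: dot_plane_rotation) (intro dot_collapse_towards_pos; auto simp: topspace_nsphere_iff)
qed (intro continuous_map_plane_rotation continuous_map_collapse_towards continuous_map_fst_real
       continuous_map_snd_nsphere_coordinate)

text \<open>The homotopy t \<mapsto> (a(t,-), b(t,-)) deforms the diagonal of X into the wedge X \<or> X,
  as in Whitehead's characterisation of Lusternik--Schnirelmann category at most one;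
  only a is required to fix the basepoint.\<close>
definition wedge_deformation :: "'x topology \<Rightarrow> 'x \<Rightarrow> (real \<times> 'x \<Rightarrow> 'x) \<Rightarrow> (real \<times> 'x \<Rightarrow> 'x) \<Rightarrow> bool" where
  "wedge_deformation X x0 a b \<longleftrightarrow>
     continuous_map (prod_topology (top_of_set {0..1}) X) X a \<and>
     continuous_map (prod_topology (top_of_set {0..1}) X) X b \<and>
     (\<forall>y\<in>topspace X. a (0, y) = y \<and> b (0, y) = y) \<and>
     (\<forall>t\<in>{0..1}. a (t, x0) = x0) \<and>
     (\<forall>y\<in>topspace X. a (1, y) = x0 \<or> b (1, y) = x0)"

lemma wedge_deformation_funspace:
  assumes "wedge_deformation X x0 a b" "t \<in> {0..1}"
  shows "(\<lambda>y. a (t, y)) \<in> topspace X \<rightarrow> topspace X"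
    and "(\<lambda>y. b (t, y)) \<in> topspace X \<rightarrow> topspace X"
  using assms by (auto simp: wedge_deformation_def continuous_map_def Pi_def)

lemma nsphere_wedge_deformation:
  assumes x0: "x0 \<in> topspace (nsphere k)" and k: "k \<ge> 1"
  obtains a b where "wedge_deformation (nsphere k) x0 a b"
proof -
  have x0x0: "dot k x0 x0 = 1"
    using x0 by (simp add: topspace_nsphere_iff)
  obtain u where u: "u \<in> topspace (nsphere k)" and x0u: "dot k x0 u = 0"
    using exists_orthogonal_unit[OF x0x0 k] by (metis topspace_nsphere_iff)
  define x1 where "x1 = (\<lambda>i. - x0 i)"
  have x1: "x1 \<in> topspace (nsphere k)"
    using x0 by (simp add: x1_def topspace_nsphere_iff)
  define a where "a = (\<lambda>(t, y). unit_vec k (collapse_towards k x0 t y))"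
  define b where "b = (\<lambda>(t, y). unit_vec k (plane_rotation k x0 u t (collapse_towards k x1 t y)))"
  have "a (1, y) = x0 \<or> b (1, y) = x0" for y
  proof (cases "dot k y x0 \<ge> 0")
    case True
    then show ?thesis
      by (simp add: a_def collapse_towards_1 unit_vec_unit x0x0)
  next
    case False
    then have "collapse_towards k x1 1 y = x1"
      by (intro collapse_towards_1) (simp add: x1_def)
    then show ?thesis
      by (simp add: b_def x1_def plane_rotation_1[OF x0x0 x0u] unit_vec_unit x0x0)
  qed
  moreover have "a (t, x0) = x0" if "t \<in> {0..1}" for t
    using that by (simp add: a_def unit_vec_collapse_towards_self x0x0)
  moreover have "a (0, y) = y" "b (0, y) = y" if "y \<in> topspace (nsphere k)" for y
    using that by (simp_all add: a_def b_def unit_vec_unit topspace_nsphere_iff)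
  moreover have "continuous_map (prod_topology (top_of_set {0..1}) (nsphere k)) (nsphere k) a"
    "continuous_map (prod_topology (top_of_set {0..1}) (nsphere k)) (nsphere k) b"
    unfolding a_def b_def
    using x0 x1 u x0u by (auto intro: continuous_map_nsphere_collapse_towards continuous_map_nsphere_rotate_collapse_towards)
  ultimately show thesis
    by (intro that[of a b]) (simp add: wedge_deformation_def)
qed

section \<open>Quotient topologies and labelled configurations\<close>

lemma istopology_quot_top: "istopology (\<lambda>U. U \<subseteq> T \<and> openin X {x \<in> topspace X. q x \<in> U})"
proof -
  have "{x \<in> topspace X. q x \<in> U \<inter> V} = {x \<in> topspace X. q x \<in> U} \<inter> {x \<in> topspace X. q x \<in> V}" for U V
    by auto
  moreover have "{x \<in> topspace X. q x \<in> \<Union>\<U>} = (\<Union>U\<in>\<U>. {x \<in> topspace X. q x \<in> U})" for \<U>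
    by auto
  ultimately show ?thesis
    unfolding istopology_def by (auto intro!: openin_Union)
qed

lemma openin_quot_top:
  "openin (quot_top X q T) U \<longleftrightarrow> U \<subseteq> T \<and> openin X {x \<in> topspace X. q x \<in> U}"
  unfolding quot_top_def by (simp add: istopology_quot_top)

lemma topspace_quot_top:
  assumes "q ` topspace X \<subseteq> T" shows "topspace (quot_top X q T) = T"
proof -
  have "{x \<in> topspace X. q x \<in> T} = topspace X"
    using assms by auto
  then have "openin (quot_top X q T) T"
    by (simp add: openin_quot_top)
  then show ?thesis
    using openin_subset openin_quot_top[of X q T "topspace (quot_top X q T)"] by blast
qed

lemma continuous_map_quot_top:
  "q ` topspace X \<subseteq> T \<Longrightarrow> continuous_map X (quot_top X q T) q"
  unfolding continuous_map_def by (auto simp: topspace_quot_top openin_quot_top)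

lemma quotient_map_quot_top:
  "q ` topspace X = T \<Longrightarrow> quotient_map X (quot_top X q T) q"
  unfolding quotient_map_def by (auto simp: topspace_quot_top openin_quot_top)

lemma topspace_smash:
  "topspace (smash X x0 Y y0) = smash_class X x0 Y y0 ` topspace (prod_topology X Y) \<union> {wedge_set X x0 Y y0}"
  unfolding smash_def by (rule topspace_quot_top) blast

lemma continuous_map_smash_class:
  "continuous_map (prod_topology X Y) (smash X x0 Y y0) (smash_class X x0 Y y0)"
  unfolding smash_def by (rule continuous_map_quot_top) blast

lemma topspace_lconf_top:
  "f \<in> topspace (lconf_top M X S) \<longleftrightarrow>
     f \<in> (\<Pi>\<^sub>E i\<in>S. topspace M \<times> topspace X) \<and> inj_on (\<lambda>i. fst (f i)) S"
  by (simp add: lconf_top_def)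

lemma topspace_Dsp:
  "topspace (Dsp M X x0 Is) =
     lconf_class M X x0 Is ` topspace (lconf_top M X (\<Union>(set Is))) \<union> {lconf_deg M X x0 Is}"
  unfolding Dsp_def by (rule topspace_quot_top) blast

lemma continuous_map_lconf_class:
  "continuous_map (lconf_top M X (\<Union>(set Is))) (Dsp M X x0 Is) (lconf_class M X x0 Is)"
  unfolding Dsp_def by (rule continuous_map_quot_top) blast

lemma lconf_class_deg:
  "f \<in> lconf_deg M X x0 Is \<Longrightarrow> lconf_class M X x0 Is f = lconf_deg M X x0 Is"
  by (simp add: lconf_class_def)

lemma lconf_class_eq_deg_if_label:
  assumes "f \<in> topspace (lconf_top M X (\<Union>(set Is)))" "i \<in> \<Union>(set Is)" "snd (f i) = x0"
  shows "lconf_class M X x0 Is f = lconf_deg M X x0 Is"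
  using assms by (intro lconf_class_deg) (auto simp: lconf_deg_def)

lemma lconf_deg_fun_upd:
  assumes "f \<in> topspace (lconf_top M X (\<Union>(set Is)))" "i \<in> \<Union>(set Is)" "x0 \<in> topspace X"
  shows "f(i := (fst (f i), x0)) \<in> lconf_deg M X x0 Is"
  using assms by (auto simp: lconf_deg_def topspace_lconf_top PiE_def Pi_def extensional_def inj_on_def)

lemma lconf_deg_in_image:
  assumes "lconf_deg M X x0 Is \<noteq> {}"
  shows "lconf_deg M X x0 Is \<in> lconf_class M X x0 Is ` topspace (lconf_top M X (\<Union>(set Is)))"
proof -
  obtain f where f: "f \<in> lconf_deg M X x0 Is"
    using assms by blast
  then have "f \<in> topspace (lconf_top M X (\<Union>(set Is)))"
    by (simp add: lconf_deg_def)
  then show ?thesis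
    using imageI[of f _ "lconf_class M X x0 Is"] by (simp add: lconf_class_deg[OF f])
qed

lemma topspace_Dsp_deg_nonempty:
  "lconf_deg M X x0 Is \<noteq> {} \<Longrightarrow>
     topspace (Dsp M X x0 Is) = lconf_class M X x0 Is ` topspace (lconf_top M X (\<Union>(set Is)))"
  by (simp add: topspace_Dsp lconf_deg_in_image insert_absorb)

lemma topspace_Dsp_deg_empty:
  assumes "x0 \<in> topspace X" "\<Union>(set Is) \<noteq> {}" "lconf_deg M X x0 Is = {}"
  shows "topspace (Dsp M X x0 Is) = {lconf_deg M X x0 Is}"
proof -
  obtain i where "i \<in> \<Union>(set Is)"
    using assms(2) by blast
  have "f \<notin> topspace (lconf_top M X (\<Union>(set Is)))" for f
    using lconf_deg_fun_upd[of f M X Is i x0] \<open>i \<in> \<Union>(set Is)\<close> assms(1,3) by auto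
  then have "topspace (lconf_top M X (\<Union>(set Is))) = {}"
    by blast
  then show ?thesis
    by (simp add: topspace_Dsp)
qed

lemma quotient_map_lconf_class:
  "lconf_deg M X x0 Is \<noteq> {} \<Longrightarrow>
     quotient_map (lconf_top M X (\<Union>(set Is))) (Dsp M X x0 Is) (lconf_class M X x0 Is)"
  unfolding Dsp_def by (intro quotient_map_quot_top) (simp add: lconf_deg_in_image insert_absorb)

definition colour_permutation :: "'i set list \<Rightarrow> ('i \<Rightarrow> 'i) \<Rightarrow> bool" where
  "colour_permutation Is \<sigma> \<longleftrightarrow> \<sigma> permutes \<Union>(set Is) \<and> (\<forall>I\<in>set Is. \<sigma> ` I = I)"

lemma colour_permutation_compose:
  "colour_permutation Is \<sigma> \<Longrightarrow> colour_permutation Is \<tau> \<Longrightarrow> colour_permutation Is (\<sigma> \<circ> \<tau>)"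
  unfolding colour_permutation_def by (metis image_comp permutes_compose)

lemma colour_permutation_inv:
  assumes "colour_permutation Is \<sigma>" shows "colour_permutation Is (inv \<sigma>)"
proof -
  have "inj \<sigma>"
    using assms permutes_inj by (auto simp: colour_permutation_def)
  then show ?thesis
    using assms by (metis colour_permutation_def image_inv_f_f permutes_inv)
qed

lemma lconf_class_eq_orbit:
  "f \<notin> lconf_deg M X x0 Is \<Longrightarrow>
     lconf_class M X x0 Is f = {f \<circ> \<sigma> |\<sigma>. colour_permutation Is \<sigma>}"
  by (simp add: lconf_class_def colour_permutation_def)

lemma lconf_class_self:
  "f \<notin> lconf_deg M X x0 Is \<Longrightarrow> f \<in> lconf_class M X x0 Is f"
  by (force simp: lconf_class_eq_orbit colour_permutation_def intro: exI[of _ id])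

lemma lconf_top_comp_permutes:
  assumes f: "f \<in> topspace (lconf_top M X S)" and \<sigma>: "\<sigma> permutes S"
  shows "f \<circ> \<sigma> \<in> topspace (lconf_top M X S)"
proof -
  have "f \<circ> \<sigma> \<in> (\<Pi>\<^sub>E i\<in>S. topspace M \<times> topspace X)"
    using f \<sigma> by (auto simp: topspace_lconf_top PiE_iff permutes_in_image permutes_not_in extensional_def)
  moreover have "inj_on ((\<lambda>i. fst (f i)) \<circ> \<sigma>) S"
    using f \<sigma> by (intro comp_inj_on) (simp_all add: topspace_lconf_top permutes_inj_on permutes_image)
  ultimately show ?thesis
    by (simp add: topspace_lconf_top o_def)
qed

lemma lconf_deg_comp_colour_permutation:
  assumes "f \<in> topspace (lconf_top M X (\<Union>(set Is)))" "colour_permutation Is \<sigma>"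
  shows "f \<circ> \<sigma> \<in> lconf_deg M X x0 Is \<longleftrightarrow> f \<in> lconf_deg M X x0 Is"
proof -
  have "\<sigma> ` \<Union>(set Is) = \<Union>(set Is)"
    using assms(2) by (simp add: colour_permutation_def permutes_image)
  then have "(\<exists>i\<in>\<Union>(set Is). snd (f (\<sigma> i)) = x0) \<longleftrightarrow> (\<exists>i\<in>\<Union>(set Is). snd (f i) = x0)"
    by (metis imageE imageI)
  then show ?thesis
    using assms lconf_top_comp_permutes by (auto simp: lconf_deg_def colour_permutation_def)
qed

lemma lconf_class_comp_colour_permutation:
  assumes f: "f \<in> topspace (lconf_top M X (\<Union>(set Is)))" and \<sigma>: "colour_permutation Is \<sigma>"
  shows "lconf_class M X x0 Is (f \<circ> \<sigma>) = lconf_class M X x0 Is f"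
proof (cases "f \<in> lconf_deg M X x0 Is")
  case True
  then show ?thesis
    using lconf_deg_comp_colour_permutation[OF assms] by (simp add: lconf_class_def)
next
  case False
  have "{f \<circ> \<sigma> \<circ> \<tau> |\<tau>. colour_permutation Is \<tau>} = {f \<circ> \<tau> |\<tau>. colour_permutation Is \<tau>}"
  proof (intro set_eqI iffI; elim CollectE exE conjE)
    fix g \<tau> assume "g = f \<circ> \<sigma> \<circ> \<tau>" "colour_permutation Is \<tau>"
    then have "g = f \<circ> (\<sigma> \<circ> \<tau>)" "colour_permutation Is (\<sigma> \<circ> \<tau>)"
      using \<sigma> colour_permutation_compose by (auto simp: o_assoc)
    then show "g \<in> {f \<circ> \<tau> |\<tau>. colour_permutation Is \<tau>}"
      by blast
  next
    fix g \<tau> assume g: "g = f \<circ> \<tau>" and \<tau>: "colour_permutation Is \<tau>"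
    have "\<sigma> permutes \<Union>(set Is)"
      using \<sigma> by (simp add: colour_permutation_def)
    then have "g = f \<circ> \<sigma> \<circ> (inv \<sigma> \<circ> \<tau>)"
      by (simp add: g fun_eq_iff permutes_inverses)
    then show "g \<in> {f \<circ> \<sigma> \<circ> \<tau> |\<tau>. colour_permutation Is \<tau>}"
      using \<sigma> \<tau> colour_permutation_compose colour_permutation_inv by blast
  qed
  then show ?thesis
    using False lconf_deg_comp_colour_permutation[OF assms] by (simp add: lconf_class_eq_orbit)
qed

lemma lconf_class_eq_cases:
  assumes "lconf_class M X x0 Is f = lconf_class M X x0 Is g"
  obtains "f \<in> lconf_deg M X x0 Is" "g \<in> lconf_deg M X x0 Is"
    | \<sigma> where "colour_permutation Is \<sigma>" "g = f \<circ> \<sigma>"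
proof (cases "f \<in> lconf_deg M X x0 Is")
  case True
  then have "g \<in> lconf_deg M X x0 Is"
    using assms lconf_class_self by (metis lconf_class_deg)
  with True that show thesis by blast
next
  case False
  then have "g \<notin> lconf_deg M X x0 Is"
    using assms lconf_class_self by (metis lconf_class_deg)
  then have "g \<in> lconf_class M X x0 Is f"
    using assms lconf_class_self by metis
  with False that show thesis
    by (auto simp: lconf_class_eq_orbit)
qed

section \<open>The null-homotopy of \<mu>\<close>

definition relabel :: "'i set \<Rightarrow> 'i set \<Rightarrow> ('x \<Rightarrow> 'x) \<Rightarrow> ('i \<Rightarrow> 'm \<times> 'x) \<Rightarrow> 'i \<Rightarrow> 'm \<times> 'x" where
  "relabel S A g f =
     (\<lambda>i. if i \<in> S then (fst (f i), if i \<in> A then g (snd (f i)) else snd (f i)) else undefined)"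

lemma relabel_in_topspace:
  assumes "f \<in> topspace (lconf_top M X S')" "S \<subseteq> S'" "g \<in> topspace X \<rightarrow> topspace X"
  shows "relabel S A g f \<in> topspace (lconf_top M X S)"
proof -
  have "inj_on (\<lambda>i. fst (f i)) S"
    using assms inj_on_subset by (auto simp: topspace_lconf_top)
  then show ?thesis
    using assms by (auto simp: topspace_lconf_top relabel_def PiE_def Pi_def extensional_def inj_on_def)
qed

lemma relabel_eq_restrict:
  assumes "f \<in> topspace (lconf_top M X S')" "S \<subseteq> S'" "\<And>y. y \<in> topspace X \<Longrightarrow> g y = y"
  shows "relabel S A g f = restrict f S"
proof
  fix i
  show "relabel S A g f i = restrict f S i"
    using assms by (cases "i \<in> S") (auto simp: relabel_def topspace_lconf_top PiE_def Pi_def)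
qed

lemma relabel_comp_permutes:
  assumes "\<sigma> permutes S'" "\<sigma> ` S = S" "\<sigma> ` A = A"
  shows "relabel S A g (f \<circ> \<sigma>) = relabel S A g f \<circ> restrict_id \<sigma> S"
proof
  fix i
  have "\<sigma> i \<in> A \<longleftrightarrow> i \<in> A" "i \<in> S \<Longrightarrow> \<sigma> i \<in> S"
    using assms permutes_inj[OF assms(1)] by (auto dest: injD)
  then show "relabel S A g (f \<circ> \<sigma>) i = (relabel S A g f \<circ> restrict_id \<sigma> S) i"
    by (simp add: relabel_def restrict_id_def)
qed

lemma colour_permutation_restrict_id:
  assumes "\<sigma> permutes S'" "\<sigma> ` S = S"
  shows "colour_permutation [S] (restrict_id \<sigma> S)"
proof -
  have "bij_betw \<sigma> S S"
    using assms permutes_inj inj_on_subset by (fastforce simp: bij_betw_def)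
  then have "restrict_id \<sigma> S permutes S"
    by (rule permutes_restrict_id)
  then show ?thesis
    using permutes_image by (fastforce simp: colour_permutation_def)
qed

lemma continuous_map_relabel:
  assumes "S \<subseteq> S'" and a: "continuous_map (prod_topology T X) X a"
  shows "continuous_map (prod_topology T (lconf_top M X S')) (lconf_top M X S)
           (\<lambda>(t, f). relabel S A (\<lambda>y. a (t, y)) f)"
proof -
  let ?Z = "prod_topology T (lconf_top M X S')"
  have proj: "continuous_map ?Z (prod_topology M X) (\<lambda>z. snd z i)" if "i \<in> S'" for i
    using continuous_map_compose[OF continuous_map_snd continuous_map_from_subtopology
        [OF continuous_map_product_projection[OF that]]]
    by (simp add: lconf_top_def o_def)
  have M_part: "continuous_map ?Z M (\<lambda>z. fst (snd z i))" if "i \<in> S'" for i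
    using continuous_map_compose[OF proj[OF that] continuous_map_fst] by (simp add: o_def)
  have X_part: "continuous_map ?Z X (\<lambda>z. snd (snd z i))" if "i \<in> S'" for i
    using continuous_map_compose[OF proj[OF that] continuous_map_snd] by (simp add: o_def)
  have a_part: "continuous_map ?Z X (\<lambda>z. a (fst z, snd (snd z i)))" if "i \<in> S'" for i
    using continuous_map_compose[OF continuous_map_pairedI[OF continuous_map_fst X_part[OF that]] a]
    by (simp add: o_def)
  have "continuous_map ?Z (prod_topology M X) (\<lambda>z. relabel S A (\<lambda>y. a (fst z, y)) (snd z) i)"
    if "i \<in> S" for i
  proof -
    have "i \<in> S'"
      using that assms(1) by blast
    then show ?thesis
      using that by (cases "i \<in> A") (simp_all add: relabel_def continuous_map_pairedI proj M_part a_part)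
  qed
  then have "continuous_map ?Z (product_topology (\<lambda>_. prod_topology M X) S)
               (\<lambda>z. relabel S A (\<lambda>y. a (fst z, y)) (snd z))"
    by (auto simp: continuous_map_componentwise relabel_def extensional_def)
  moreover have "relabel S A (\<lambda>y. a (fst z, y)) (snd z) \<in> topspace (lconf_top M X S)"
    if "z \<in> topspace ?Z" for z
    using that assms continuous_map_image_subset_topspace[OF a]
    by (intro relabel_in_topspace[of _ M X S']) (auto simp: case_prod_unfold)
  ultimately show ?thesis
    by (auto simp: case_prod_unfold lconf_top_def continuous_map_in_subtopology)
qed

abbreviation mu_codomain ::
    "'m topology \<Rightarrow> 'x topology \<Rightarrow> 'x \<Rightarrow> 'i set \<Rightarrow> 'i set \<Rightarrow> 'i set
      \<Rightarrow> (('i \<Rightarrow> 'm \<times> 'x) set \<times> ('i \<Rightarrow> 'm \<times> 'x) set) set topology" where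
  "mu_codomain M X x0 A B C \<equiv>
     smash (Dsp M X x0 [A \<union> B]) (lconf_deg M X x0 [A \<union> B])
           (Dsp M X x0 [A \<union> C]) (lconf_deg M X x0 [A \<union> C])"

abbreviation mu_codomain_base ::
    "'m topology \<Rightarrow> 'x topology \<Rightarrow> 'x \<Rightarrow> 'i set \<Rightarrow> 'i set \<Rightarrow> 'i set
      \<Rightarrow> (('i \<Rightarrow> 'm \<times> 'x) set \<times> ('i \<Rightarrow> 'm \<times> 'x) set) set" where
  "mu_codomain_base M X x0 A B C \<equiv>
     wedge_set (Dsp M X x0 [A \<union> B]) (lconf_deg M X x0 [A \<union> B])
               (Dsp M X x0 [A \<union> C]) (lconf_deg M X x0 [A \<union> C])"

definition mu_homotopy ::
    "'m topology \<Rightarrow> 'x topology \<Rightarrow> 'x \<Rightarrow> 'i set \<Rightarrow> 'i set \<Rightarrow> 'i set \<Rightarrow> (real \<times> 'x \<Rightarrow> 'x) \<Rightarrow> (real \<times> 'x \<Rightarrow> 'x)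
      \<Rightarrow> real \<times> ('i \<Rightarrow> 'm \<times> 'x) \<Rightarrow> (('i \<Rightarrow> 'm \<times> 'x) set \<times> ('i \<Rightarrow> 'm \<times> 'x) set) set" where
  "mu_homotopy M X x0 A B C a b = (\<lambda>(t, f).
     smash_class (Dsp M X x0 [A \<union> B]) (lconf_deg M X x0 [A \<union> B])
                 (Dsp M X x0 [A \<union> C]) (lconf_deg M X x0 [A \<union> C])
       (lconf_class M X x0 [A \<union> B] (relabel (A \<union> B) A (\<lambda>y. a (t, y)) f),
        lconf_class M X x0 [A \<union> C] (relabel (A \<union> C) A (\<lambda>y. b (t, y)) f)))"

lemma continuous_map_mu_homotopy:
  assumes a: "continuous_map (prod_topology T X) X a" and b: "continuous_map (prod_topology T X) X b"
  shows "continuous_map (prod_topology T (lconf_top M X (A \<union> B \<union> C))) (mu_codomain M X x0 A B C)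
           (mu_homotopy M X x0 A B C a b)"
proof -
  let ?Z = "prod_topology T (lconf_top M X (A \<union> B \<union> C))"
  have "continuous_map ?Z (Dsp M X x0 [A \<union> B])
          (\<lambda>(t, f). lconf_class M X x0 [A \<union> B] (relabel (A \<union> B) A (\<lambda>y. a (t, y)) f))"
    using continuous_map_compose[OF continuous_map_relabel[where S="A \<union> B" and S'="A \<union> B \<union> C", OF _ a]
        continuous_map_lconf_class[of M X "[A \<union> B]" x0, simplified]]
    by (auto simp: o_def case_prod_unfold)
  moreover have "continuous_map ?Z (Dsp M X x0 [A \<union> C])
          (\<lambda>(t, f). lconf_class M X x0 [A \<union> C] (relabel (A \<union> C) A (\<lambda>y. b (t, y)) f))"
    using continuous_map_compose[OF continuous_map_relabel[where S="A \<union> C" and S'="A \<union> B \<union> C", OF _ b]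
        continuous_map_lconf_class[of M X "[A \<union> C]" x0, simplified]]
    by (auto simp: o_def case_prod_unfold)
  ultimately show ?thesis
    using continuous_map_compose[OF continuous_map_pairedI continuous_map_smash_class]
    by (simp add: mu_homotopy_def o_def case_prod_unfold)
qed

lemma mu_homotopy_eq_base:
  assumes wd: "wedge_deformation X x0 a b" and t: "t \<in> {0..1}"
    and f: "f \<in> topspace (lconf_top M X (A \<union> B \<union> C))"
    and label: "(\<exists>i\<in>A \<union> B. snd (relabel (A \<union> B) A (\<lambda>y. a (t, y)) f i) = x0) \<or>
                (\<exists>i\<in>A \<union> C. snd (relabel (A \<union> C) A (\<lambda>y. b (t, y)) f i) = x0)"
  shows "mu_homotopy M X x0 A B C a b (t, f) = mu_codomain_base M X x0 A B C"
proof -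
  have rB: "relabel (A \<union> B) A (\<lambda>y. a (t, y)) f \<in> topspace (lconf_top M X (\<Union>(set [A \<union> B])))"
    and rC: "relabel (A \<union> C) A (\<lambda>y. b (t, y)) f \<in> topspace (lconf_top M X (\<Union>(set [A \<union> C])))"
    using f wedge_deformation_funspace[OF wd t] by (auto intro!: relabel_in_topspace)
  have "lconf_class M X x0 [A \<union> B] (relabel (A \<union> B) A (\<lambda>y. a (t, y)) f) = lconf_deg M X x0 [A \<union> B] \<or>
        lconf_class M X x0 [A \<union> C] (relabel (A \<union> C) A (\<lambda>y. b (t, y)) f) = lconf_deg M X x0 [A \<union> C]"
    using label
  proof (elim disjE bexE)
    fix i assume "i \<in> A \<union> B" "snd (relabel (A \<union> B) A (\<lambda>y. a (t, y)) f i) = x0"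
    then show ?thesis
      using lconf_class_eq_deg_if_label[OF rB, of i x0] by simp
  next
    fix i assume "i \<in> A \<union> C" "snd (relabel (A \<union> C) A (\<lambda>y. b (t, y)) f i) = x0"
    then show ?thesis
      using lconf_class_eq_deg_if_label[OF rC, of i x0] by simp
  qed
  then show ?thesis
    by (auto simp: mu_homotopy_def smash_class_def)
qed

lemma mu_homotopy_deg_eq_base:
  assumes wd: "wedge_deformation X x0 a b" and t: "t \<in> {0..1}"
    and f: "f \<in> lconf_deg M X x0 [A, B, C]"
  shows "mu_homotopy M X x0 A B C a b (t, f) = mu_codomain_base M X x0 A B C"
proof (rule mu_homotopy_eq_base[OF wd t])
  obtain i where i: "i \<in> A \<union> B \<union> C" "snd (f i) = x0"
    using f by (auto simp: lconf_deg_def)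
  show "f \<in> topspace (lconf_top M X (A \<union> B \<union> C))"
    using f by (simp add: lconf_deg_def Un_assoc)
  have "a (t, x0) = x0"
    using wd t by (simp add: wedge_deformation_def)
  then show "(\<exists>i\<in>A \<union> B. snd (relabel (A \<union> B) A (\<lambda>y. a (t, y)) f i) = x0) \<or>
             (\<exists>i\<in>A \<union> C. snd (relabel (A \<union> C) A (\<lambda>y. b (t, y)) f i) = x0)"
    using i by (auto simp: relabel_def)
qed

lemma mu_homotopy_1_eq_base:
  assumes wd: "wedge_deformation X x0 a b" and A: "A \<noteq> {}"
    and f: "f \<in> topspace (lconf_top M X (A \<union> B \<union> C))"
  shows "mu_homotopy M X x0 A B C a b (1, f) = mu_codomain_base M X x0 A B C"
proof (rule mu_homotopy_eq_base[OF wd _ f])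
  obtain i where i: "i \<in> A"
    using A by blast
  then have "snd (f i) \<in> topspace X"
    using f by (auto simp: topspace_lconf_top PiE_def Pi_def)
  then have "a (1, snd (f i)) = x0 \<or> b (1, snd (f i)) = x0"
    using wd by (simp add: wedge_deformation_def)
  then show "(\<exists>i\<in>A \<union> B. snd (relabel (A \<union> B) A (\<lambda>y. a (1, y)) f i) = x0) \<or>
             (\<exists>i\<in>A \<union> C. snd (relabel (A \<union> C) A (\<lambda>y. b (1, y)) f i) = x0)"
    using i by (auto simp: relabel_def)
qed simp

lemma mu_homotopy_comp_colour_permutation:
  assumes wd: "wedge_deformation X x0 a b" and t: "t \<in> {0..1}"
    and f: "f \<in> topspace (lconf_top M X (A \<union> B \<union> C))" and \<sigma>: "colour_permutation [A, B, C] \<sigma>"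
  shows "mu_homotopy M X x0 A B C a b (t, f \<circ> \<sigma>) = mu_homotopy M X x0 A B C a b (t, f)"
proof -
  have \<sigma>_perm: "\<sigma> permutes A \<union> B \<union> C" and \<sigma>A: "\<sigma> ` A = A"
    and \<sigma>AB: "\<sigma> ` (A \<union> B) = A \<union> B" and \<sigma>AC: "\<sigma> ` (A \<union> C) = A \<union> C"
    using \<sigma> by (auto simp: colour_permutation_def Un_assoc image_Un)
  have class_eq: "lconf_class M X x0 [S] (relabel S A g (f \<circ> \<sigma>)) = lconf_class M X x0 [S] (relabel S A g f)"
    if "S \<subseteq> A \<union> B \<union> C" "\<sigma> ` S = S" "g \<in> topspace X \<rightarrow> topspace X" for S g
  proof -
    have "relabel S A g f \<in> topspace (lconf_top M X (\<Union>(set [S])))"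
      using f that by (auto intro: relabel_in_topspace)
    then show ?thesis
      unfolding relabel_comp_permutes[OF \<sigma>_perm that(2) \<sigma>A]
      by (rule lconf_class_comp_colour_permutation[OF _ colour_permutation_restrict_id[OF \<sigma>_perm that(2)]])
  qed
  have "A \<union> B \<subseteq> A \<union> B \<union> C" "A \<union> C \<subseteq> A \<union> B \<union> C"
    by auto
  then show ?thesis
    using class_eq[OF _ \<sigma>AB wedge_deformation_funspace(1)[OF wd t]]
      class_eq[OF _ \<sigma>AC wedge_deformation_funspace(2)[OF wd t]]
    by (simp add: mu_homotopy_def)
qed

lemma mu_homotopy_0_eq_mu_map:
  assumes wd: "wedge_deformation X x0 a b" and f: "f \<in> topspace (lconf_top M X (A \<union> B \<union> C))"
  shows "mu_homotopy M X x0 A B C a b (0, f) = mu_map M X x0 A B C (lconf_class M X x0 [A, B, C] f)"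
proof (cases "f \<in> lconf_deg M X x0 [A, B, C]")
  case True
  then show ?thesis
    using mu_homotopy_deg_eq_base[OF wd _ True] by (simp add: lconf_class_deg mu_map_def)
next
  case False
  let ?cl = "lconf_class M X x0 [A, B, C]"
  \<comment> \<open>mu_map evaluates on the representative g chosen by SOME; it differs from f by a colour permutation.\<close>
  define g where "g = (SOME g. g \<in> topspace (lconf_top M X (A \<union> B \<union> C)) \<and> ?cl g = ?cl f)"
  have g: "g \<in> topspace (lconf_top M X (A \<union> B \<union> C))" "?cl g = ?cl f"
    unfolding g_def using someI_ex[of "\<lambda>g. g \<in> topspace (lconf_top M X (A \<union> B \<union> C)) \<and> ?cl g = ?cl f"] f
    by blast+
  obtain \<sigma> where \<sigma>: "colour_permutation [A, B, C] \<sigma>" "g = f \<circ> \<sigma>"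
    using lconf_class_eq_cases[OF g(2)[symmetric]] False by metis
  have "?cl f \<noteq> lconf_deg M X x0 [A, B, C]"
    using False lconf_class_self by metis
  moreover have "relabel (A \<union> B) A (\<lambda>y. a (0, y)) g = restrict g (A \<union> B)"
    "relabel (A \<union> C) A (\<lambda>y. b (0, y)) g = restrict g (A \<union> C)"
    using wd g(1) by (auto simp: wedge_deformation_def intro!: relabel_eq_restrict)
  ultimately have "mu_map M X x0 A B C (?cl f) = mu_homotopy M X x0 A B C a b (0, g)"
    by (simp add: mu_map_def mu_homotopy_def g_def[symmetric])
  also have "\<dots> = mu_homotopy M X x0 A B C a b (0, f)"
    using mu_homotopy_comp_colour_permutation[OF wd _ f \<sigma>(1)] \<sigma>(2) by simp
  finally show ?thesis ..
qed

lemma mu_homotopy_eq_if_lconf_class_eq: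
  assumes wd: "wedge_deformation X x0 a b" and t: "t \<in> {0..1}"
    and f: "f \<in> topspace (lconf_top M X (A \<union> B \<union> C))"
    and "lconf_class M X x0 [A, B, C] f = lconf_class M X x0 [A, B, C] g"
  shows "mu_homotopy M X x0 A B C a b (t, f) = mu_homotopy M X x0 A B C a b (t, g)"
  using assms(4)
proof (cases rule: lconf_class_eq_cases)
  case 1
  then show ?thesis
    using mu_homotopy_deg_eq_base[OF wd t 1(1)] mu_homotopy_deg_eq_base[OF wd t 1(2)] by simp
next
  case (2 \<sigma>)
  then show ?thesis
    using mu_homotopy_comp_colour_permutation[OF wd t f] by simp
qed

lemma mu_homotopy_descends:
  assumes wd: "wedge_deformation X x0 a b" and deg: "lconf_deg M X x0 [A, B, C] \<noteq> {}"
  obtains H where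
    "continuous_map (prod_topology (top_of_set {0..1}) (Dsp M X x0 [A, B, C])) (mu_codomain M X x0 A B C) H"
    "\<And>t f. t \<in> {0..1} \<Longrightarrow> f \<in> topspace (lconf_top M X (A \<union> B \<union> C)) \<Longrightarrow>
       H (t, lconf_class M X x0 [A, B, C] f) = mu_homotopy M X x0 A B C a b (t, f)"
proof -
  let ?I = "top_of_set {0..1::real}" and ?L = "lconf_top M X (A \<union> B \<union> C)"
  let ?cl = "lconf_class M X x0 [A, B, C]"
  have "locally_compact_space ?I"
    by (intro compact_imp_locally_compact_space compact_space_subtopology) simp
  moreover have "Hausdorff_space ?I"
    by (rule Hausdorff_space_subtopology) simp
  moreover have "quotient_map ?L (Dsp M X x0 [A, B, C]) ?cl"
    using quotient_map_lconf_class[OF deg] by (simp add: Un_assoc)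
  ultimately have q: "quotient_map (prod_topology ?I ?L) (prod_topology ?I (Dsp M X x0 [A, B, C])) (\<lambda>(t, f). (t, ?cl f))"
    by (intro quotient_map_prod_right) auto
  have h: "continuous_map (prod_topology ?I ?L) (mu_codomain M X x0 A B C) (mu_homotopy M X x0 A B C a b)"
    using wd by (intro continuous_map_mu_homotopy) (auto simp: wedge_deformation_def)
  obtain H where "continuous_map (prod_topology ?I (Dsp M X x0 [A, B, C])) (mu_codomain M X x0 A B C) H"
    and H: "\<And>z. z \<in> topspace (prod_topology ?I ?L) \<Longrightarrow>
              H ((\<lambda>(t, f). (t, ?cl f)) z) = mu_homotopy M X x0 A B C a b z"
  proof (rule quotient_map_lift_exists[OF q h])
    fix z z' assume z: "z \<in> topspace (prod_topology ?I ?L)" "z' \<in> topspace (prod_topology ?I ?L)"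
      and eq: "(\<lambda>(t, f). (t, ?cl f)) z = (\<lambda>(t, f). (t, ?cl f)) z'"
    obtain t f g where tfg: "z = (t, f)" "z' = (t, g)" and cl: "?cl f = ?cl g"
      using eq by (cases z, cases z') auto
    with z have "t \<in> {0..1}" "f \<in> topspace ?L"
      by auto
    then show "mu_homotopy M X x0 A B C a b z = mu_homotopy M X x0 A B C a b z'"
      using mu_homotopy_eq_if_lconf_class_eq[OF wd _ _ cl] tfg by simp
  qed (rule that; assumption)
  show thesis
  proof (rule that)
    fix t :: real and f assume "t \<in> {0..1}" "f \<in> topspace ?L"
    then show "H (t, ?cl f) = mu_homotopy M X x0 A B C a b (t, f)"
      using H[of "(t, f)"] by simp
  qed fact
qed

lemma mu_map_nullhomotopic:
  assumes x0: "x0 \<in> topspace X" and A: "A \<noteq> {}" and wd: "wedge_deformation X x0 a b"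
  shows "homotopic_with (\<lambda>h. h (lconf_deg M X x0 [A, B, C]) = mu_codomain_base M X x0 A B C)
           (Dsp M X x0 [A, B, C]) (mu_codomain M X x0 A B C)
           (mu_map M X x0 A B C) (\<lambda>_. mu_codomain_base M X x0 A B C)"
    (is "homotopic_with ?P ?D ?Sm _ _")
proof -
  let ?L = "lconf_top M X (A \<union> B \<union> C)" and ?cl = "lconf_class M X x0 [A, B, C]"
  let ?d = "lconf_deg M X x0 [A, B, C]" and ?W = "mu_codomain_base M X x0 A B C"
  show ?thesis
  proof (cases "?d = {}")
    case True
    then have D: "topspace ?D = {?d}"
      using topspace_Dsp_deg_empty[OF x0 _ True] A by simp
    have mu_d: "mu_map M X x0 A B C ?d = ?W"
      by (simp add: mu_map_def)
    have "continuous_map ?D ?Sm (\<lambda>_. ?W)"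
      by (simp add: topspace_smash)
    then have "continuous_map ?D ?Sm (mu_map M X x0 A B C)"
      by (rule continuous_map_eq) (simp add: D mu_d)
    then show ?thesis
      by (rule homotopic_with_equal[rotated 2]) (simp_all add: D mu_d)
  next
    case False
    then obtain f1 where f1: "f1 \<in> ?d"
      by blast
    then have f1_L: "f1 \<in> topspace ?L" and d_eq: "?cl f1 = ?d"
      by (simp_all add: lconf_deg_def lconf_class_deg Un_assoc)
    have D: "topspace ?D = ?cl ` topspace ?L"
      using topspace_Dsp_deg_nonempty[OF False] by (simp add: Un_assoc)
    obtain H where H_cont: "continuous_map (prod_topology (top_of_set {0..1::real}) ?D) ?Sm H"
      and H: "\<And>t f. t \<in> {0..1} \<Longrightarrow> f \<in> topspace ?L \<Longrightarrow>
                 H (t, ?cl f) = mu_homotopy M X x0 A B C a b (t, f)"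
      using mu_homotopy_descends[OF wd False] by blast
    have "H (t, ?d) = ?W" if "t \<in> {0..1}" for t
      using H[OF that f1_L] mu_homotopy_deg_eq_base[OF wd that f1] d_eq by simp
    then have "homotopic_with ?P ?D ?Sm (\<lambda>z. H (0, z)) (\<lambda>z. H (1, z))"
      unfolding homotopic_with_def using H_cont by auto
    then show ?thesis
    proof (rule homotopic_with_eq)
      fix z assume "z \<in> topspace ?D"
      then obtain f where f: "f \<in> topspace ?L" and z: "z = ?cl f"
        using D by blast
      show "mu_map M X x0 A B C z = H (0, z)" "?W = H (1, z)"
        using H[of 0 f] H[of 1 f] mu_homotopy_0_eq_mu_map[OF wd f] mu_homotopy_1_eq_base[OF wd A f] f z by simp_all
    next
      show "?P h \<longleftrightarrow> ?P k" if "\<And>z. z \<in> topspace ?D \<Longrightarrow> h z = k z" for h k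
        using that D f1_L d_eq by (metis imageI)
    qed
  qed
qed

theorem lemma2p4:
  fixes M :: "'m topology" and n l :: nat and x0 :: "nat \<Rightarrow> real"
    and A B C :: "'i set"
  assumes "top_manifold M n"
    and "l > 0"
    and "x0 \<in> topspace (nsphere (2 * l))"
    and "finite A" "finite B" "finite C"
    and "A \<inter> B = {}" "A \<inter> C = {}" "B \<inter> C = {}"
    and "A \<noteq> {}"
  shows "homotopic_with
           (\<lambda>h. h (lconf_deg M (nsphere (2 * l)) x0 [A, B, C]) =
                wedge_set (Dsp M (nsphere (2 * l)) x0 [A \<union> B]) (lconf_deg M (nsphere (2 * l)) x0 [A \<union> B])
                          (Dsp M (nsphere (2 * l)) x0 [A \<union> C]) (lconf_deg M (nsphere (2 * l)) x0 [A \<union> C]))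
           (Dsp M (nsphere (2 * l)) x0 [A, B, C])
           (smash (Dsp M (nsphere (2 * l)) x0 [A \<union> B]) (lconf_deg M (nsphere (2 * l)) x0 [A \<union> B])
                  (Dsp M (nsphere (2 * l)) x0 [A \<union> C]) (lconf_deg M (nsphere (2 * l)) x0 [A \<union> C]))
           (mu_map M (nsphere (2 * l)) x0 A B C)
           (\<lambda>_. wedge_set (Dsp M (nsphere (2 * l)) x0 [A \<union> B]) (lconf_deg M (nsphere (2 * l)) x0 [A \<union> B])
                          (Dsp M (nsphere (2 * l)) x0 [A \<union> C]) (lconf_deg M (nsphere (2 * l)) x0 [A \<union> C]))"
proof -
  have "2 * l \<ge> 1"
    using \<open>l > 0\<close> by simp
  then obtain a b where "wedge_deformation (nsphere (2 * l)) x0 a b"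
    using nsphere_wedge_deformation[OF \<open>x0 \<in> topspace (nsphere (2 * l))\<close>] by blast
  then show ?thesis
    using mu_map_nullhomotopic[OF \<open>x0 \<in> topspace (nsphere (2 * l))\<close> \<open>A \<noteq> {}\<close>] by blast
qed

end
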